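(* Let $(A,B,R)$ be a normalized formal context with $A$ and $B$ finite, and let $\{(X_i^*,Y_i^* )\mid i\in I\}$ be the set of all join-irreducible elements of $(\mathcal{C}_N,\leq)$. Then $\{X_i^*\mid i\in I\}$ is a partition of $B$ and $\{Y_i^*\mid i\in I\}$ is a partition of $A$.
   Context: A formal context is a triple $(A,B,R)$ with $R\subseteq A\times B$. The necessity operators are $X^{\uparrow_N}=\{a\in A\mid \text{for all } b\in B,\ (a,b)\in R\Rightarrow b\in X\}$ for $X\subseteq B$, and $Y^{\downarrow^N}=\{b\in B\mid \text{for all } a\in A,\ (a,b)\in R\Rightarrow a\in Y\}$ for $Y\subseteq A$. $\mathcal{C}_N=\{(X,Y)\mid X\subseteq B,\ Y\subseteq A,\ X^{\uparrow_N}=Y,\ Y^{\downarrow^N}=X\}$, ordered by $(X_1,Y_1)\leq(X_2,Y_2)$ iff $X_1\subseteq X_2$ (equivalently $Y_1\subseteq Y_2$); it is a complete lattice with join $(X_1\cup X_2,Y_1\cup Y_2)$, meet $(X_1\cap X_2,Y_1\cap Y_2)$, bottom $(\varnothing,\varnothing)$ and top $(B,A)$. The context is normalized if for every $a\in A$ there are $b,b'\in B$ with $(a,b)\in R$, $(a,b')\notin R$, and for every $b\in B$ there are $a,a'\in A$ with $(a,b)\in R$, $(a',b)\notin R$. An element $x$ of a lattice is join-irreducible if $x$ is not the bottom element and $x=y\vee z$ implies $x=y$ or $x=z$. *)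

theory Defs
  imports Main "HOL-Library.Disjoint_Sets"
begin

definition nec_up :: "'a set \<Rightarrow> 'b set \<Rightarrow> ('a \<times> 'b) set \<Rightarrow> 'b set \<Rightarrow> 'a set" where
  "nec_up A B R X = {a \<in> A. \<forall>b\<in>B. (a, b) \<in> R \<longrightarrow> b \<in> X}"

definition nec_down :: "'a set \<Rightarrow> 'b set \<Rightarrow> ('a \<times> 'b) set \<Rightarrow> 'a set \<Rightarrow> 'b set" where
  "nec_down A B R Y = {b \<in> B. \<forall>a\<in>A. (a, b) \<in> R \<longrightarrow> a \<in> Y}"

definition C_N :: "'a set \<Rightarrow> 'b set \<Rightarrow> ('a \<times> 'b) set \<Rightarrow> ('b set \<times> 'a set) set" where
  "C_N A B R = {(X, Y). X \<subseteq> B \<and> Y \<subseteq> A \<and> nec_up A B R X = Y \<and> nec_down A B R Y = X}"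

definition normalized :: "'a set \<Rightarrow> 'b set \<Rightarrow> ('a \<times> 'b) set \<Rightarrow> bool" where
  "normalized A B R \<longleftrightarrow>
     (\<forall>a\<in>A. \<exists>b\<in>B. \<exists>b'\<in>B. (a, b) \<in> R \<and> (a, b') \<notin> R) \<and>
     (\<forall>b\<in>B. \<exists>a\<in>A. \<exists>a'\<in>A. (a, b) \<in> R \<and> (a', b) \<notin> R)"

definition join_irreducible_N :: "'a set \<Rightarrow> 'b set \<Rightarrow> ('a \<times> 'b) set \<Rightarrow> ('b set \<times> 'a set) set" where
  "join_irreducible_N A B R = {(X, Y). (X, Y) \<in> C_N A B R \<and> (X, Y) \<noteq> ({}, {}) \<and>
     (\<forall>X1 Y1 X2 Y2. (X1, Y1) \<in> C_N A B R \<longrightarrow> (X2, Y2) \<in> C_N A B R \<longrightarrow>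
        (X, Y) = (X1 \<union> X2, Y1 \<union> Y2) \<longrightarrow> (X, Y) = (X1, Y1) \<or> (X, Y) = (X2, Y2))}"

end

theory Submission
  imports Defs
begin

text \<open>As soon as every object and every attribute is related to something, a pair \<open>(X, Y)\<close>
  belongs to \<open>C_N\<close> exactly when no edge of \<open>R\<close> joins \<open>X \<union> Y\<close> to its complement. Such
  saturated pairs are closed under intersection, difference and arbitrary meets. Hence a
  join-irreducible pair, being the join of its intersection with and its difference from any
  element of \<open>C_N\<close>, is either contained in or disjoint from that element, so two
  join-irreducibles that meet coincide, and the least saturated pair containing a given attribute
  is join-irreducible. The join-irreducibles are the connected components of the bipartite graph
  \<open>R\<close>.\<close>

definition saturated :: "('a \<times> 'b) set \<Rightarrow> 'b set \<Rightarrow> 'a set \<Rightarrow> bool" where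
  "saturated R X Y \<longleftrightarrow> (\<forall>(a, b) \<in> R. a \<in> Y \<longleftrightarrow> b \<in> X)"

lemma saturated_Int:
  "saturated R X Y \<Longrightarrow> saturated R X' Y' \<Longrightarrow> saturated R (X \<inter> X') (Y \<inter> Y')"
  by (auto simp: saturated_def)

lemma saturated_Diff:
  "saturated R X Y \<Longrightarrow> saturated R X' Y' \<Longrightarrow> saturated R (X - X') (Y - Y')"
  by (auto simp: saturated_def)

lemma saturated_Inter:
  assumes "\<And>X Y. (X, Y) \<in> F \<Longrightarrow> saturated R X Y"
  shows "saturated R (\<Inter>(fst ` F)) (\<Inter>(snd ` F))"
  using assms by (fastforce simp: saturated_def)

lemma normalized_imp_Domain_Range:
  assumes "normalized A B R"
  shows "A \<subseteq> Domain R" and "B \<subseteq> Range R"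
  using assms by (auto simp: normalized_def)

lemma partition_on_image:
  assumes "\<And>p. p \<in> J \<Longrightarrow> f p \<subseteq> S" and "\<And>p. p \<in> J \<Longrightarrow> f p \<noteq> {}"
    and "\<And>s. s \<in> S \<Longrightarrow> \<exists>p \<in> J. s \<in> f p"
    and "\<And>p q. p \<in> J \<Longrightarrow> q \<in> J \<Longrightarrow> f p \<inter> f q \<noteq> {} \<Longrightarrow> f p = f q"
  shows "partition_on S (f ` J)"
proof (rule partition_onI)
  show "\<Union>(f ` J) = S" using assms(1,3) by blast
  show "disjnt P Q" if "P \<in> f ` J" "Q \<in> f ` J" "P \<noteq> Q" for P Q
    using that assms(4) by (auto simp: disjnt_def)
  show "{} \<notin> f ` J" using assms(2) by force
qed

context
  fixes A :: "'a set" and B :: "'b set" and R :: "('a \<times> 'b) set"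
  assumes R_subset: "R \<subseteq> A \<times> B" and A_Domain: "A \<subseteq> Domain R" and B_Range: "B \<subseteq> Range R"
begin

lemma C_N_iff_saturated:
  "(X, Y) \<in> C_N A B R \<longleftrightarrow> X \<subseteq> B \<and> Y \<subseteq> A \<and> saturated R X Y"
proof
  assume "(X, Y) \<in> C_N A B R"
  then have XY: "X \<subseteq> B" "Y \<subseteq> A" and up: "nec_up A B R X = Y" and down: "nec_down A B R Y = X"
    by (simp_all add: C_N_def)
  have "a \<in> Y \<longleftrightarrow> b \<in> X" if "(a, b) \<in> R" for a b
  proof
    assume "a \<in> Y"
    then show "b \<in> X" using that R_subset unfolding up[symmetric] nec_up_def by blast
  next
    assume "b \<in> X"
    then show "a \<in> Y" using that R_subset unfolding down[symmetric] nec_down_def by blast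
  qed
  with XY show "X \<subseteq> B \<and> Y \<subseteq> A \<and> saturated R X Y" by (auto simp: saturated_def)
next
  assume XY: "X \<subseteq> B \<and> Y \<subseteq> A \<and> saturated R X Y"
  have "nec_up A B R X = Y"
  proof (intro equalityI subsetI)
    fix a assume "a \<in> nec_up A B R X"
    moreover obtain b where "(a, b) \<in> R" using \<open>a \<in> nec_up A B R X\<close> A_Domain
      by (auto simp: nec_up_def)
    ultimately show "a \<in> Y" using XY R_subset by (fastforce simp: nec_up_def saturated_def)
  qed (use XY in \<open>auto simp: nec_up_def saturated_def\<close>)
  moreover have "nec_down A B R Y = X"
  proof (intro equalityI subsetI)
    fix b assume "b \<in> nec_down A B R Y"
    moreover obtain a where "(a, b) \<in> R" using \<open>b \<in> nec_down A B R Y\<close> B_Range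
      by (auto simp: nec_down_def)
    ultimately show "b \<in> X" using XY R_subset by (fastforce simp: nec_down_def saturated_def)
  qed (use XY in \<open>auto simp: nec_down_def saturated_def\<close>)
  ultimately show "(X, Y) \<in> C_N A B R" using XY by (simp add: C_N_def)
qed

lemma join_irreducible_N_saturated:
  assumes "(X, Y) \<in> join_irreducible_N A B R"
  shows "X \<subseteq> B" and "Y \<subseteq> A" and "saturated R X Y"
  using assms by (auto simp: join_irreducible_N_def C_N_iff_saturated)

lemma join_irreducible_N_nonempty:
  assumes "(X, Y) \<in> join_irreducible_N A B R"
  shows "X \<noteq> {}" and "Y \<noteq> {}"
proof -
  note XY = join_irreducible_N_saturated[OF assms]
  have "X \<noteq> {} \<or> Y \<noteq> {}" using assms by (auto simp: join_irreducible_N_def)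
  moreover have "X \<noteq> {}" if "a \<in> Y" for a
  proof -
    obtain b where "(a, b) \<in> R" using \<open>a \<in> Y\<close> XY(2) A_Domain by blast
    with \<open>a \<in> Y\<close> XY(3) show ?thesis by (auto simp: saturated_def)
  qed
  moreover have "Y \<noteq> {}" if "b \<in> X" for b
  proof -
    obtain a where "(a, b) \<in> R" using \<open>b \<in> X\<close> XY(1) B_Range by blast
    with \<open>b \<in> X\<close> XY(3) show ?thesis by (auto simp: saturated_def)
  qed
  ultimately show "X \<noteq> {}" and "Y \<noteq> {}" by blast+
qed

lemma join_irreducible_N_subset_or_disjoint:
  assumes J: "(X, Y) \<in> join_irreducible_N A B R" and XY': "(X', Y') \<in> C_N A B R"
  shows "(X \<subseteq> X' \<and> Y \<subseteq> Y') \<or> (X \<inter> X' = {} \<and> Y \<inter> Y' = {})"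
proof -
  note XY = join_irreducible_N_saturated[OF J]
  have sat': "saturated R X' Y'" using XY' by (simp add: C_N_iff_saturated)
  have "(X \<inter> X', Y \<inter> Y') \<in> C_N A B R" and "(X - X', Y - Y') \<in> C_N A B R"
    using XY sat' by (auto simp: C_N_iff_saturated intro: saturated_Int saturated_Diff)
  moreover have "(X, Y) = (X \<inter> X' \<union> (X - X'), Y \<inter> Y' \<union> (Y - Y'))" by auto
  ultimately have "(X, Y) = (X \<inter> X', Y \<inter> Y') \<or> (X, Y) = (X - X', Y - Y')"
    using J unfolding join_irreducible_N_def by blast
  then show ?thesis by auto
qed

lemma join_irreducible_N_eqI:
  assumes J1: "(X1, Y1) \<in> join_irreducible_N A B R"
    and J2: "(X2, Y2) \<in> join_irreducible_N A B R"
    and meet: "X1 \<inter> X2 \<noteq> {} \<or> Y1 \<inter> Y2 \<noteq> {}"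
  shows "(X1, Y1) = (X2, Y2)"
proof -
  have C1: "(X1, Y1) \<in> C_N A B R" and C2: "(X2, Y2) \<in> C_N A B R"
    using J1 J2 by (simp_all add: join_irreducible_N_def)
  have "X1 \<subseteq> X2 \<and> Y1 \<subseteq> Y2"
    using join_irreducible_N_subset_or_disjoint[OF J1 C2] meet by blast
  moreover have "X2 \<subseteq> X1 \<and> Y2 \<subseteq> Y1"
    using join_irreducible_N_subset_or_disjoint[OF J2 C1] meet by blast
  ultimately show ?thesis by blast
qed

lemma ex_join_irreducible_N_mem:
  assumes "b \<in> B"
  shows "\<exists>X Y. (X, Y) \<in> join_irreducible_N A B R \<and> b \<in> X"
proof -
  define F where "F = {(X, Y). (X, Y) \<in> C_N A B R \<and> b \<in> X}"
  define Xb Yb where "Xb = \<Inter>(fst ` F)" and "Yb = \<Inter>(snd ` F)"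
  have "(B, A) \<in> F"
    using assms R_subset by (auto simp: F_def C_N_iff_saturated saturated_def)
  then have "Xb \<subseteq> B" and "Yb \<subseteq> A" by (auto simp: Xb_def Yb_def)
  moreover have "saturated R Xb Yb"
    unfolding Xb_def Yb_def by (rule saturated_Inter) (simp add: F_def C_N_iff_saturated)
  ultimately have C: "(Xb, Yb) \<in> C_N A B R" by (simp add: C_N_iff_saturated)
  have b: "b \<in> Xb" by (simp add: Xb_def F_def)
  have least: "Xb \<subseteq> X \<and> Yb \<subseteq> Y" if "(X, Y) \<in> C_N A B R" "b \<in> X" for X Y
    using that by (force simp: Xb_def Yb_def F_def)
  have "(Xb, Yb) = (X1, Y1) \<or> (Xb, Yb) = (X2, Y2)"
    if "(X1, Y1) \<in> C_N A B R" "(X2, Y2) \<in> C_N A B R" "(Xb, Yb) = (X1 \<union> X2, Y1 \<union> Y2)"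
    for X1 Y1 X2 Y2
    using that least b by blast
  with C b have "(Xb, Yb) \<in> join_irreducible_N A B R"
    unfolding join_irreducible_N_def by blast
  with b show ?thesis by blast
qed

lemma partition_on_fst_join_irreducible_N:
  "partition_on B (fst ` join_irreducible_N A B R)"
proof (rule partition_on_image)
  fix p q assume "p \<in> join_irreducible_N A B R" "q \<in> join_irreducible_N A B R"
    and "fst p \<inter> fst q \<noteq> {}"
  then show "fst p = fst q" using join_irreducible_N_eqI[of "fst p" "snd p" "fst q" "snd q"] by simp
next
  fix b assume "b \<in> B"
  then obtain X Y where "(X, Y) \<in> join_irreducible_N A B R" and "b \<in> X"
    using ex_join_irreducible_N_mem by blast
  then show "\<exists>p \<in> join_irreducible_N A B R. b \<in> fst p" by force
next
  fix p assume "p \<in> join_irreducible_N A B R"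
  then show "fst p \<subseteq> B" and "fst p \<noteq> {}"
    using join_irreducible_N_saturated(1) join_irreducible_N_nonempty(1) by (cases p; simp)+
qed

lemma partition_on_snd_join_irreducible_N:
  "partition_on A (snd ` join_irreducible_N A B R)"
proof (rule partition_on_image)
  fix p q assume "p \<in> join_irreducible_N A B R" "q \<in> join_irreducible_N A B R"
    and "snd p \<inter> snd q \<noteq> {}"
  then show "snd p = snd q" using join_irreducible_N_eqI[of "fst p" "snd p" "fst q" "snd q"] by simp
next
  fix a assume "a \<in> A"
  then obtain b where ab: "(a, b) \<in> R" using A_Domain by auto
  then obtain X Y where J: "(X, Y) \<in> join_irreducible_N A B R" and "b \<in> X"
    using R_subset ex_join_irreducible_N_mem by blast
  then have "a \<in> Y" using ab join_irreducible_N_saturated(3)[OF J] by (auto simp: saturated_def)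
  with J show "\<exists>p \<in> join_irreducible_N A B R. a \<in> snd p" by force
next
  fix p assume "p \<in> join_irreducible_N A B R"
  then show "snd p \<subseteq> A" and "snd p \<noteq> {}"
    using join_irreducible_N_saturated(2) join_irreducible_N_nonempty(2) by (cases p; simp)+
qed

end

theorem mainTheorem3:
  fixes A :: "'a set" and B :: "'b set" and R :: "('a \<times> 'b) set"
  assumes "R \<subseteq> A \<times> B"
    and "normalized A B R"
    and "finite A" and "finite B"
  shows "partition_on B (fst ` join_irreducible_N A B R)
       \<and> partition_on A (snd ` join_irreducible_N A B R)"
  using partition_on_fst_join_irreducible_N partition_on_snd_join_irreducible_N
    assms(1) normalized_imp_Domain_Range[OF assms(2)] by blast

end
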